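(* Let $G=(V,E)$ be an infinite, connected, locally finite graph (no self-loops) and let $v\in V$. Then the sequence $\big(\mathbb{P}_v(\tau_v=2t)\big)_{t\geq 1}$ is non-increasing in $t$.
   Context: $(X_t)$ is simple random walk on $G$ with $X_0=v$ and $\tau_v=\min\{t\geq 1:X_t=v\}$. *)

theory Defs
  imports "HOL-Probability.Probability"
begin

text \<open>Simple random walk on a simple graph given by a symmetric, irreflexive
edge relation E. One step from u: uniform distribution on the neighbours of u.\<close>

definition srw_step :: "('a \<Rightarrow> 'a \<Rightarrow> bool) \<Rightarrow> 'a \<Rightarrow> 'a pmf" where
  "srw_step E u = pmf_of_set {w. E u w}"

text \<open>srw_path E n u is the law of the trajectory [X_0, X_1, ..., X_n] of the
simple random walk started at X_0 = u.\<close>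

fun srw_path :: "('a \<Rightarrow> 'a \<Rightarrow> bool) \<Rightarrow> nat \<Rightarrow> 'a \<Rightarrow> 'a list pmf" where
  "srw_path E 0 u = return_pmf [u]"
| "srw_path E (Suc n) u =
     bind_pmf (srw_step E u) (\<lambda>w. map_pmf (\<lambda>xs. u # xs) (srw_path E n w))"

text \<open>P_v(tau_v = n) for n \<ge> 1, where tau_v = min{t \<ge> 1. X_t = v} and X_0 = v.\<close>

definition first_return_prob :: "('a \<Rightarrow> 'a \<Rightarrow> bool) \<Rightarrow> 'a \<Rightarrow> nat \<Rightarrow> real" where
  "first_return_prob E v n =
     measure_pmf.prob (srw_path E n v)
       {xs. xs ! n = v \<and> (\<forall>i\<in>{1..<n}. xs ! i \<noteq> v)}"

end

theory Submission
  imports Defs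
begin

(* Let h_n(w) be the probability that the walk started at w visits v for the first
   time at step n (step 0 included), so h_0 is the indicator of v.  Then
   h_{n+1} = P h_n, where P is the transition operator of the walk killed at v:
   (P f)(x) = 0 for x = v and (P f)(x) = mean of f over the neighbours of x otherwise.
   With respect to the degree-weighted pairing <f,g> = sum_x deg x * f x * g x,
   P is self-adjoint on functions vanishing at v and is a contraction in the
   associated norm (Cauchy-Schwarz over each neighbourhood).  Moreover
   P_v(tau_v = m+1) = <h_1, h_m> / deg v.  Hence
     P_v(tau_v = 2t+2) = <h_1, h_{2t+1}>/deg v = <h_{t+1}, h_{t+1}>/deg v
                      <= <h_t, h_t>/deg v = <h_1, h_{2t-1}>/deg v = P_v(tau_v = 2t).
   All sums range over the finite ball of radius M around v, which contains the
   supports of the h_n with n <= M.  The argument only needs a symmetric, locally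
   finite edge relation without isolated vertices; the theorem follows since an
   infinite connected graph has no isolated vertices. *)

lemma measure_bind_pmf_of_set:
  assumes "A \<noteq> {}" "finite A"
  shows "measure_pmf.prob (bind_pmf (pmf_of_set A) f) X
           = (\<Sum>a\<in>A. measure_pmf.prob (f a) X) / card A"
proof -
  have "ennreal (measure_pmf.prob (bind_pmf (pmf_of_set A) f) X)
          = emeasure (bind_pmf (pmf_of_set A) f) X"
    by (simp add: measure_pmf.emeasure_eq_measure)
  also have "\<dots> = (\<Sum>a\<in>A. emeasure (f a) X) / card A"
    using assms by (simp add: nn_integral_pmf_of_set)
  also have "\<dots> = ennreal ((\<Sum>a\<in>A. measure_pmf.prob (f a) X) / card A)"
    using assms
    by (simp add: measure_pmf.emeasure_eq_measure sum_nonneg ennreal_of_nat_eq_real_of_nat,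
        subst divide_ennreal, auto intro: sum_nonneg simp: card_gt_0_iff)
  finally show ?thesis
    by (subst (asm) ennreal_inj) (auto intro!: sum_nonneg divide_nonneg_nonneg)
qed

text \<open>A locally finite graph without isolated vertices, with a distinguished vertex v.\<close>

locale srw_graph =
  fixes V :: "'a set" and E :: "'a \<Rightarrow> 'a \<Rightarrow> bool" and v :: 'a
  assumes edges_in_V: "\<And>u w. E u w \<Longrightarrow> u \<in> V \<and> w \<in> V"
    and sym: "\<And>u w. E u w \<Longrightarrow> E w u"
    and locally_finite: "\<And>u. u \<in> V \<Longrightarrow> finite {w. E u w}"
    and has_neighbour: "\<And>u. u \<in> V \<Longrightarrow> \<exists>w. E u w"
    and v_in_V: "v \<in> V"
begin

definition nbrs :: "'a \<Rightarrow> 'a set" where "nbrs u = {w. E u w}"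

definition deg :: "'a \<Rightarrow> real" where "deg u = real (card (nbrs u))"

lemma finite_nbrs: "u \<in> V \<Longrightarrow> finite (nbrs u)"
  using locally_finite by (simp add: nbrs_def)

lemma nbrs_in_V: "w \<in> nbrs u \<Longrightarrow> w \<in> V"
  using edges_in_V by (auto simp: nbrs_def)

lemma nbrs_nonempty: "u \<in> V \<Longrightarrow> nbrs u \<noteq> {}"
  using has_neighbour by (auto simp: nbrs_def)

lemma deg_pos: "u \<in> V \<Longrightarrow> deg u > 0"
  using finite_nbrs nbrs_nonempty by (simp add: deg_def card_gt_0_iff)

definition hit :: "nat \<Rightarrow> 'a \<Rightarrow> real" where
  "hit n w = measure_pmf.prob (srw_path E n w) {xs. xs ! n = v \<and> (\<forall>j<n. xs ! j \<noteq> v)}"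

definition kstep :: "('a \<Rightarrow> real) \<Rightarrow> 'a \<Rightarrow> real" where
  "kstep f x = (if x = v then 0 else (\<Sum>y\<in>nbrs x. f y) / deg x)"

lemma hit_0: "hit 0 w = (if w = v then 1 else 0)"
  by (simp add: hit_def)

lemma hit_Suc:
  assumes w: "w \<in> V"
  shows "hit (Suc n) w = kstep (hit n) w"
proof -
  have tail: "(\<lambda>ys. w # ys) -` {xs. xs ! Suc n = v \<and> (\<forall>j<Suc n. xs ! j \<noteq> v)}
      = (if w = v then {} else {ys. ys ! n = v \<and> (\<forall>j<n. ys ! j \<noteq> v)})"
    by (auto simp: less_Suc_eq_0_disj)
  have "hit (Suc n) w = (\<Sum>x\<in>nbrs w. measure_pmf.prob (srw_path E n x)
      ((\<lambda>ys. w # ys) -` {xs. xs ! Suc n = v \<and> (\<forall>j<Suc n. xs ! j \<noteq> v)})) / deg w"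
    using finite_nbrs[OF w] nbrs_nonempty[OF w] unfolding hit_def
    by (simp add: srw_step_def measure_bind_pmf_of_set deg_def nbrs_def del: vimage_Collect_eq)
  also have "\<dots> = kstep (hit n) w"
    unfolding tail by (simp add: kstep_def hit_def)
  finally show ?thesis .
qed

lemma hit_at_v: "1 \<le> n \<Longrightarrow> hit n v = 0"
  by (cases n) (simp_all add: hit_Suc v_in_V kstep_def)

text \<open>A first return to v at step n+1 is a step to a neighbour x followed by a
  first visit of v from x at step n.\<close>

lemma first_return_prob_Suc:
  "first_return_prob E v (Suc n) = (\<Sum>x\<in>nbrs v. hit n x) / deg v"
proof -
  have tail: "(\<lambda>ys. v # ys) -` {xs. xs ! Suc n = v \<and> (\<forall>i\<in>{1..<Suc n}. xs ! i \<noteq> v)}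
      = {ys. ys ! n = v \<and> (\<forall>j<n. ys ! j \<noteq> v)}"
  proof -
    have "{1..<Suc n} = Suc ` {..<n}" by (auto simp: image_Suc_lessThan)
    then show ?thesis by auto
  qed
  have "first_return_prob E v (Suc n) = (\<Sum>x\<in>nbrs v. measure_pmf.prob (srw_path E n x)
      ((\<lambda>ys. v # ys) -` {xs. xs ! Suc n = v \<and> (\<forall>i\<in>{1..<Suc n}. xs ! i \<noteq> v)})) / deg v"
    using finite_nbrs[OF v_in_V] nbrs_nonempty[OF v_in_V] unfolding first_return_prob_def
    by (simp add: srw_step_def measure_bind_pmf_of_set deg_def nbrs_def
        del: vimage_Collect_eq One_nat_def)
  then show ?thesis
    unfolding tail hit_def .
qed

text \<open>The ball of radius n around v.  It is finite and contains the support of hit n,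
  so all pairings below can be taken over a fixed finite set.\<close>

primrec ball :: "nat \<Rightarrow> 'a set" where
  "ball 0 = {v}"
| "ball (Suc n) = ball n \<union> (\<Union>u\<in>ball n. nbrs u)"

lemma ball_subset_V: "ball n \<subseteq> V"
  by (induct n) (auto simp: v_in_V nbrs_in_V)

lemma finite_ball: "finite (ball n)"
  using ball_subset_V by (induct n) (auto intro!: finite_nbrs)

lemma ball_mono: "m \<le> n \<Longrightarrow> ball m \<subseteq> ball n"
  by (rule lift_Suc_mono_le[of ball]) auto

lemma hit_support: "w \<in> V \<Longrightarrow> hit n w \<noteq> 0 \<Longrightarrow> w \<in> ball n"
proof (induct n arbitrary: w)
  case 0
  then show ?case by (simp add: hit_0 split: if_splits)
next
  case (Suc n)
  then have "(\<Sum>x\<in>nbrs w. hit n x) \<noteq> 0"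
    by (auto simp: hit_Suc kstep_def split: if_splits)
  then obtain x where x: "x \<in> nbrs w" "hit n x \<noteq> 0"
    by (meson sum.neutral)
  then have "x \<in> ball n" using Suc.hyps nbrs_in_V by blast
  moreover have "w \<in> nbrs x" using x sym by (auto simp: nbrs_def)
  ultimately show ?case by auto
qed

lemma hit_Suc_ball: "x \<in> ball M \<Longrightarrow> hit (Suc n) x = kstep (hit n) x"
  using hit_Suc ball_subset_V by blast

lemma hit_support_ball: "m \<le> M \<Longrightarrow> \<forall>y\<in>V. hit m y \<noteq> 0 \<longrightarrow> y \<in> ball M"
  using hit_support ball_mono by blast

lemma sum_nbrs_eq:
  assumes T: "finite T" "T \<subseteq> V" and x: "x \<in> V"
    and supp: "\<forall>y\<in>V. f y \<noteq> 0 \<longrightarrow> y \<in> T"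
  shows "(\<Sum>y\<in>nbrs x. f y) = (\<Sum>y\<in>T. if E x y then f y else (0::real))"
proof -
  have "(\<Sum>y\<in>T. if E x y then f y else 0) = (\<Sum>y\<in>T \<inter> nbrs x. f y)"
    using T by (simp add: sum.inter_restrict nbrs_def)
  also have "\<dots> = (\<Sum>y\<in>nbrs x. f y)"
    by (rule sum.mono_neutral_left) (use finite_nbrs[OF x] supp nbrs_in_V in auto)
  finally show ?thesis by simp
qed

text \<open>Weighting kstep by the degree turns the pairing into a sum over edges;
  the vertex v drops out because g vanishes there.\<close>

lemma kstep_pairing_edges:
  assumes T: "finite T" "T \<subseteq> V" and supp_f: "\<forall>y\<in>V. f y \<noteq> 0 \<longrightarrow> y \<in> T"
    and g_v: "g v = 0"
  shows "(\<Sum>x\<in>T. deg x * g x * kstep f x) = (\<Sum>x\<in>T. \<Sum>y\<in>T. if E x y then g x * f y else 0)"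
proof (rule sum.cong[OF refl])
  fix x assume "x \<in> T"
  then have xV: "x \<in> V" using T by auto
  show "deg x * g x * kstep f x = (\<Sum>y\<in>T. if E x y then g x * f y else 0)"
  proof (cases "x = v")
    case True
    then have "(\<Sum>y\<in>T. if E x y then g x * f y else 0) = 0"
      using g_v by (intro sum.neutral) simp
    then show ?thesis using True by (simp add: kstep_def)
  next
    case False
    then have "deg x * g x * kstep f x = g x * (\<Sum>y\<in>nbrs x. f y)"
      using deg_pos[OF xV] by (simp add: kstep_def)
    also have "\<dots> = g x * (\<Sum>y\<in>T. if E x y then f y else 0)"
      using sum_nbrs_eq[OF T xV supp_f] by simp
    also have "\<dots> = (\<Sum>y\<in>T. if E x y then g x * f y else 0)"
      by (simp add: sum_distrib_left if_distrib cong: if_cong)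
    finally show ?thesis .
  qed
qed

text \<open>The killed operator is self-adjoint for the degree-weighted pairing on
  functions vanishing at v (the edge relation is symmetric).\<close>

lemma kstep_self_adjoint:
  assumes T: "finite T" "T \<subseteq> V"
    and supp_f: "\<forall>y\<in>V. f y \<noteq> 0 \<longrightarrow> y \<in> T" and supp_g: "\<forall>y\<in>V. g y \<noteq> 0 \<longrightarrow> y \<in> T"
    and f_v: "f v = 0" and g_v: "g v = 0"
  shows "(\<Sum>x\<in>T. deg x * g x * kstep f x) = (\<Sum>x\<in>T. deg x * f x * kstep g x)"
proof -
  have "(\<Sum>x\<in>T. deg x * g x * kstep f x) = (\<Sum>x\<in>T. \<Sum>y\<in>T. if E x y then g x * f y else 0)"
    by (rule kstep_pairing_edges[of T f g, OF T supp_f g_v])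
  also have "\<dots> = (\<Sum>y\<in>T. \<Sum>x\<in>T. if E x y then g x * f y else 0)"
    by (rule sum.swap)
  also have "\<dots> = (\<Sum>y\<in>T. \<Sum>x\<in>T. if E y x then f y * g x else 0)"
    by (intro sum.cong refl) (auto dest: sym)
  also have "\<dots> = (\<Sum>x\<in>T. deg x * f x * kstep g x)"
    by (rule kstep_pairing_edges[of T g f, OF T supp_g f_v, symmetric])
  finally show ?thesis .
qed

lemma kstep_square_le:
  assumes "x \<in> V"
  shows "deg x * (kstep f x)\<^sup>2 \<le> (\<Sum>y\<in>nbrs x. (f y)\<^sup>2)"
proof (cases "x = v")
  case True
  then show ?thesis by (simp add: kstep_def sum_nonneg)
next
  case False
  have deg: "deg x > 0" using deg_pos[OF assms] .
  have "deg x * (kstep f x)\<^sup>2 = (\<Sum>y\<in>nbrs x. f y)\<^sup>2 / deg x"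
    using False deg by (simp add: kstep_def power2_eq_square)
  also have "\<dots> \<le> (\<Sum>y\<in>nbrs x. (f y)\<^sup>2)"
    using deg sum_squared_le_sum_of_squares[of f "nbrs x"] by (simp add: deg_def pos_divide_le_eq)
  finally show ?thesis .
qed

text \<open>The killed operator is a contraction for the degree-weighted norm: each
  vertex y receives weight (f y)^2 from at most deg y neighbours.\<close>

lemma kstep_contraction:
  assumes T: "finite T" "T \<subseteq> V" and supp_f: "\<forall>y\<in>V. f y \<noteq> 0 \<longrightarrow> y \<in> T"
  shows "(\<Sum>x\<in>T. deg x * (kstep f x)\<^sup>2) \<le> (\<Sum>x\<in>T. deg x * (f x)\<^sup>2)"
proof -
  have supp_sq: "\<forall>y\<in>V. (f y)\<^sup>2 \<noteq> 0 \<longrightarrow> y \<in> T" using supp_f by auto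
  have "(\<Sum>x\<in>T. deg x * (kstep f x)\<^sup>2) \<le> (\<Sum>x\<in>T. \<Sum>y\<in>T. if E x y then (f y)\<^sup>2 else 0)"
  proof (rule sum_mono)
    fix x assume "x \<in> T"
    then have xV: "x \<in> V" using T by auto
    show "deg x * (kstep f x)\<^sup>2 \<le> (\<Sum>y\<in>T. if E x y then (f y)\<^sup>2 else 0)"
      using kstep_square_le[of x f, OF xV] sum_nbrs_eq[OF T xV supp_sq] by simp
  qed
  also have "\<dots> = (\<Sum>y\<in>T. (f y)\<^sup>2 * card {x\<in>T. E x y})"
    using T by (subst sum.swap) (simp add: sum.inter_filter[symmetric] mult.commute)
  also have "\<dots> \<le> (\<Sum>y\<in>T. deg y * (f y)\<^sup>2)"
  proof (rule sum_mono)
    fix y assume "y \<in> T"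
    then have yV: "y \<in> V" using T by auto
    have "card {x\<in>T. E x y} \<le> card (nbrs y)"
      by (rule card_mono[OF finite_nbrs[OF yV]]) (auto simp: nbrs_def dest: sym)
    then have "real (card {x\<in>T. E x y}) \<le> deg y" by (simp add: deg_def)
    then show "(f y)\<^sup>2 * card {x\<in>T. E x y} \<le> deg y * (f y)\<^sup>2"
      by (metis mult.commute mult_left_mono zero_le_power2)
  qed
  finally show ?thesis .
qed

definition pairing :: "'a set \<Rightarrow> ('a \<Rightarrow> real) \<Rightarrow> ('a \<Rightarrow> real) \<Rightarrow> real" where
  "pairing T f g = (\<Sum>x\<in>T. deg x * f x * g x)"

lemma hit_pairing_step:
  assumes "1 \<le> a" "1 \<le> b" "a + 1 \<le> M" "b + 1 \<le> M"
  shows "pairing (ball M) (hit a) (hit (Suc b)) = pairing (ball M) (hit (Suc a)) (hit b)"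
proof -
  have a_v: "hit a v = 0" and b_v: "hit b v = 0"
    using assms(1,2) by (simp_all add: hit_at_v)
  have "pairing (ball M) (hit a) (hit (Suc b)) = (\<Sum>x\<in>ball M. deg x * hit a x * kstep (hit b) x)"
    unfolding pairing_def by (intro sum.cong refl) (simp add: hit_Suc_ball)
  also have "\<dots> = (\<Sum>x\<in>ball M. deg x * hit b x * kstep (hit a) x)"
    by (rule kstep_self_adjoint[OF finite_ball ball_subset_V
          hit_support_ball hit_support_ball b_v a_v]) (use assms in auto)
  also have "\<dots> = pairing (ball M) (hit (Suc a)) (hit b)"
    unfolding pairing_def by (intro sum.cong refl) (simp add: hit_Suc_ball mult_ac)
  finally show ?thesis .
qed

lemma hit_pairing_shift:
  assumes "1 \<le> a" "1 \<le> b" "a + j \<le> M" "b + j \<le> M"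
  shows "pairing (ball M) (hit a) (hit (b + j)) = pairing (ball M) (hit (a + j)) (hit b)"
  using assms
proof (induct j arbitrary: b)
  case 0
  then show ?case by simp
next
  case (Suc j)
  have "pairing (ball M) (hit a) (hit (b + Suc j)) = pairing (ball M) (hit a) (hit (Suc b + j))"
    by simp
  also have "\<dots> = pairing (ball M) (hit (a + j)) (hit (Suc b))"
    using Suc.hyps[of "Suc b"] Suc.prems by simp
  also have "\<dots> = pairing (ball M) (hit (Suc (a + j))) (hit b)"
    by (rule hit_pairing_step) (use Suc.prems in auto)
  finally show ?case by simp
qed

text \<open>For x \<noteq> v, deg x * hit 1 x is 1 if x is a neighbour of v and 0 otherwise, so
  pairing with hit 1 sums over the neighbours of v.\<close>

lemma first_return_prob_pairing:
  assumes "1 \<le> m" "m \<le> M"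
  shows "first_return_prob E v (Suc m) = pairing (ball M) (hit 1) (hit m) / deg v"
proof -
  have m_v: "hit m v = 0"
    using assms(1) by (rule hit_at_v)
  have "pairing (ball M) (hit 1) (hit m) = (\<Sum>x\<in>ball M. if E v x then hit m x else 0)"
    unfolding pairing_def
  proof (intro sum.cong refl)
    fix x assume "x \<in> ball M"
    then have xV: "x \<in> V" using ball_subset_V by auto
    show "deg x * hit 1 x * hit m x = (if E v x then hit m x else 0)"
    proof (cases "x = v")
      case True
      then show ?thesis using m_v by simp
    next
      case False
      have "(\<Sum>y\<in>nbrs x. hit 0 y) = (if v \<in> nbrs x then 1 else 0)"
        using finite_nbrs[OF xV] by (simp add: hit_0)
      then have "deg x * hit 1 x = (if E v x then 1 else 0)"
        using False deg_pos[OF xV] by (auto simp: hit_Suc[OF xV] kstep_def nbrs_def dest: sym)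
      then show ?thesis by simp
    qed
  qed
  also have "\<dots> = (\<Sum>x\<in>nbrs v. hit m x)"
    by (rule sum_nbrs_eq[OF finite_ball ball_subset_V v_in_V hit_support_ball[OF assms(2)],
          symmetric])
  finally show ?thesis by (simp add: first_return_prob_Suc)
qed

lemma hit_norm_decreasing:
  assumes "t + 1 \<le> M"
  shows "pairing (ball M) (hit (Suc t)) (hit (Suc t)) \<le> pairing (ball M) (hit t) (hit t)"
proof -
  have "pairing (ball M) (hit (Suc t)) (hit (Suc t)) = (\<Sum>x\<in>ball M. deg x * (kstep (hit t) x)\<^sup>2)"
    unfolding pairing_def
    by (intro sum.cong refl) (simp add: hit_Suc_ball power2_eq_square)
  also have "\<dots> \<le> (\<Sum>x\<in>ball M. deg x * (hit t x)\<^sup>2)"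
    by (rule kstep_contraction[OF finite_ball ball_subset_V hit_support_ball]) (use assms in auto)
  also have "\<dots> = pairing (ball M) (hit t) (hit t)"
    unfolding pairing_def by (simp add: power2_eq_square mult_ac)
  finally show ?thesis .
qed

theorem first_return_prob_even_mono:
  assumes t: "1 \<le> t"
  shows "first_return_prob E v (2 * Suc t) \<le> first_return_prob E v (2 * t)"
proof -
  define M where "M = 2 * t + 2"
  have odd_succ: "2 * Suc t = Suc ((t + 1) + t)" and odd_pred: "2 * t = Suc (t + (t - 1))"
    using t by simp_all
  have "first_return_prob E v (2 * Suc t) = pairing (ball M) (hit 1) (hit ((t + 1) + t)) / deg v"
    unfolding odd_succ by (rule first_return_prob_pairing) (simp_all add: M_def)
  also have "\<dots> = pairing (ball M) (hit (Suc t)) (hit (Suc t)) / deg v"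
    by (subst hit_pairing_shift) (use t in \<open>auto simp: M_def\<close>)
  also have "\<dots> \<le> pairing (ball M) (hit t) (hit t) / deg v"
    using hit_norm_decreasing[of t M] deg_pos[OF v_in_V] by (simp add: M_def divide_right_mono)
  also have "\<dots> = pairing (ball M) (hit 1) (hit (t + (t - 1))) / deg v"
    by (subst hit_pairing_shift) (use t in \<open>auto simp: M_def\<close>)
  also have "\<dots> = first_return_prob E v (2 * t)"
    unfolding odd_pred by (rule first_return_prob_pairing[symmetric]) (use t in \<open>simp_all add: M_def\<close>)
  finally show ?thesis .
qed

end

lemma infinite_connected_has_neighbour:
  assumes connected: "\<And>u w. u \<in> V \<Longrightarrow> w \<in> V \<Longrightarrow> E\<^sup>*\<^sup>* u w"
    and infinite_V: "infinite V" and u: "u \<in> V"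
  shows "\<exists>w. E u w"
proof -
  obtain w where w: "w \<in> V" "w \<noteq> u"
    using infinite_V by (metis finite.intros(1) finite_insert insertCI subsetI finite_subset)
  have "E\<^sup>*\<^sup>* u w" using connected u w(1) .
  then show ?thesis using w(2) by (metis converse_rtranclpE)
qed

theorem corollary2p3:
  fixes V :: "'a set" and E :: "'a \<Rightarrow> 'a \<Rightarrow> bool" and v :: 'a
  assumes edges_in_V: "\<And>u w. E u w \<Longrightarrow> u \<in> V \<and> w \<in> V"
    and sym: "\<And>u w. E u w \<Longrightarrow> E w u"
    and no_loops: "\<And>u. \<not> E u u"
    and locally_finite: "\<And>u. u \<in> V \<Longrightarrow> finite {w. E u w}"
    and connected: "\<And>u w. u \<in> V \<Longrightarrow> w \<in> V \<Longrightarrow> E\<^sup>*\<^sup>* u w"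
    and infinite_V: "infinite V"
    and v_in_V: "v \<in> V"
  shows "\<And>t. t \<ge> 1 \<Longrightarrow> first_return_prob E v (2 * Suc t) \<le> first_return_prob E v (2 * t)"
proof -
  interpret srw_graph V E v
    using edges_in_V sym locally_finite v_in_V
      infinite_connected_has_neighbour[OF connected infinite_V]
    by unfold_locales blast+
  show "first_return_prob E v (2 * Suc t) \<le> first_return_prob E v (2 * t)" if "t \<ge> 1" for t
    using first_return_prob_even_mono that by simp
qed

end
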